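(* Let $X$ be a finite set of proposals with $m=|X|$. Let $s$ be a normalised positional scoring function given by a scoring vector $(s_1,\ldots,s_m)\in\mathbb{R}^m$, and let $p$ be any array of probability distributions $p_{R,x}$. Then the score-based DSF $\Delta^p_s$ satisfies Weak Position Unanimity: for every profile $R$ and every proposal $x$ that occurs in the same position in every agent's ranking in $R$, either $x\notin\Delta^p_s(R)$ or $\Delta^p_s(R)=X$.
   Context: Let $X!$ be the set of strict linear orders on $X$. A profile is a function $R:N\to X!$ with $N\subset\mathbb{N}$ finite and nonempty; a DSF maps every profile to a nonempty subset of $X$. For $i\in N$, $\mathit{pos}^R_i(x)=1+|\{y\in X: y \text{ is ranked above } x \text{ by } R_i\}|$. For $C\subseteq N$, $R{\restriction_C}$ is the restriction of $R$ to $C$, and $\overline{C}=N\setminus C$. The normalised positional scoring function with vector $(s_1,\ldots,s_m)$ assigns, for nonempty $C\subseteq N$, $s(R{\restriction_C},x)=\frac{1}{|C|}\sum_{i\in C} s_{\mathit{pos}^R_i(x)}$. Define $\mathit{div}_s(R,x,C,\overline{C})=|s(R{\restriction_C},x)-s(R{\restriction_{\overline{C}}},x)|$ if $C$ and $\overline{C}$ are both nonempty, and $0$ otherwise. For each profile $R:N\to X!$ and proposal $x$, $p_{R,x}$ is a probability distribution on unordered decompositions $\{C,\overline{C}\}$ of $N$ into two complementary subsets. The score-based DSF is $\Delta^p_s(R)=\arg\max_{x\in X}\sum_{\{C,\overline{C}\}} p_{R,x}(\{C,\overline{C}\})\cdot \mathit{div}_s(R,x,C,\overline{C})$. *)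

theory Defs
  imports Complex_Main
begin

text \<open>A ranking is a strict linear order on the set of proposals X, represented as a
relation r; (y, x) \<in> r means that y is ranked above x.\<close>

definition is_profile :: "'a set \<Rightarrow> nat set \<Rightarrow> (nat \<Rightarrow> ('a \<times> 'a) set) \<Rightarrow> bool" where
  "is_profile X N R \<longleftrightarrow> finite N \<and> N \<noteq> {} \<and> (\<forall>i\<in>N. strict_linear_order_on X (R i))"

definition pos :: "'a set \<Rightarrow> ('a \<times> 'a) set \<Rightarrow> 'a \<Rightarrow> nat" where
  "pos X r x = 1 + card {y \<in> X. (y, x) \<in> r}"

definition score :: "'a set \<Rightarrow> (nat \<Rightarrow> real) \<Rightarrow> (nat \<Rightarrow> ('a \<times> 'a) set) \<Rightarrow> nat set \<Rightarrow> 'a \<Rightarrow> real" where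
  "score X s R C x = (1 / real (card C)) * (\<Sum>i\<in>C. s (pos X (R i) x))"

definition divg :: "'a set \<Rightarrow> (nat \<Rightarrow> real) \<Rightarrow> (nat \<Rightarrow> ('a \<times> 'a) set) \<Rightarrow> 'a \<Rightarrow> nat set \<Rightarrow> nat set \<Rightarrow> real" where
  "divg X s R x C C' = (if C \<noteq> {} \<and> C' \<noteq> {} then \<bar>score X s R C x - score X s R C' x\<bar> else 0)"

definition decomps :: "nat set \<Rightarrow> nat set set set" where
  "decomps N = {{C, N - C} | C. C \<subseteq> N}"

definition is_distr :: "nat set \<Rightarrow> (nat set set \<Rightarrow> real) \<Rightarrow> bool" where
  "is_distr N q \<longleftrightarrow> (\<forall>d\<in>decomps N. q d \<ge> 0) \<and> (\<Sum>d\<in>decomps N. q d) = 1"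

text \<open>Expected divergence of x; for a decomposition d = {C, N - C} we pick a component C
(the divergence is symmetric, so the choice does not matter).\<close>
definition exp_div :: "'a set \<Rightarrow> (nat \<Rightarrow> real)
    \<Rightarrow> (nat set \<Rightarrow> (nat \<Rightarrow> ('a \<times> 'a) set) \<Rightarrow> 'a \<Rightarrow> nat set set \<Rightarrow> real)
    \<Rightarrow> nat set \<Rightarrow> (nat \<Rightarrow> ('a \<times> 'a) set) \<Rightarrow> 'a \<Rightarrow> real" where
  "exp_div X s p N R x =
     (\<Sum>d\<in>decomps N. p N R x d * (let C = (SOME C. C \<in> d) in divg X s R x C (N - C)))"

definition score_dsf :: "'a set \<Rightarrow> (nat \<Rightarrow> real)
    \<Rightarrow> (nat set \<Rightarrow> (nat \<Rightarrow> ('a \<times> 'a) set) \<Rightarrow> 'a \<Rightarrow> nat set set \<Rightarrow> real)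
    \<Rightarrow> nat set \<Rightarrow> (nat \<Rightarrow> ('a \<times> 'a) set) \<Rightarrow> 'a set" where
  "score_dsf X s p N R = {x \<in> X. \<forall>y\<in>X. exp_div X s p N R y \<le> exp_div X s p N R x}"

definition weak_position_unanimity ::
    "'a set \<Rightarrow> (nat set \<Rightarrow> (nat \<Rightarrow> ('a \<times> 'a) set) \<Rightarrow> 'a set) \<Rightarrow> bool" where
  "weak_position_unanimity X F \<longleftrightarrow>
     (\<forall>N R x. is_profile X N R \<longrightarrow> x \<in> X \<longrightarrow>
        (\<exists>k. \<forall>i\<in>N. pos X (R i) x = k) \<longrightarrow> x \<notin> F N R \<or> F N R = X)"

end

theory Submission
  imports Defs
begin

text \<open>If every agent ranks x in the same position k, then every coalition gives x the score
s k, so x has expected divergence 0. Divergences are nonnegative, so 0 is the least possible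
value: if x is nevertheless a maximiser, every proposal has expected divergence 0 and all of
them tie.\<close>

lemma score_eq_if_same_pos:
  assumes "finite C" "C \<noteq> {}" "\<forall>i\<in>C. pos X (R i) x = k"
  shows "score X s R C x = s k"
proof -
  have "(\<Sum>i\<in>C. s (pos X (R i) x)) = real (card C) * s k"
    using assms(3) by simp
  then show ?thesis
    using assms(1,2) unfolding score_def by simp
qed

lemma divg_nonneg: "divg X s R x C C' \<ge> 0"
  unfolding divg_def by auto

lemma divg_eq_0_if_same_pos:
  assumes "finite C" "finite C'" "\<forall>i\<in>C \<union> C'. pos X (R i) x = k"
  shows "divg X s R x C C' = 0"
  using assms score_eq_if_same_pos[of C X R x k s] score_eq_if_same_pos[of C' X R x k s]
  unfolding divg_def by auto

lemma some_mem_decomps_subset: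
  assumes "d \<in> decomps N"
  shows "(SOME C. C \<in> d) \<subseteq> N"
proof -
  obtain C0 where "C0 \<subseteq> N" "d = {C0, N - C0}"
    using assms unfolding decomps_def by blast
  moreover have "(SOME C. C \<in> d) \<in> d"
    using \<open>d = {C0, N - C0}\<close> by (metis insertI1 someI)
  ultimately show ?thesis by blast
qed

lemma exp_div_nonneg:
  assumes "is_distr N (p N R x)"
  shows "exp_div X s p N R x \<ge> 0"
  using assms unfolding exp_div_def is_distr_def Let_def
  by (intro sum_nonneg) (simp add: divg_nonneg)

lemma exp_div_eq_0_if_same_pos:
  assumes "finite N" "\<forall>i\<in>N. pos X (R i) x = k"
  shows "exp_div X s p N R x = 0"
  unfolding exp_div_def Let_def
proof (intro sum.neutral ballI)
  fix d assume "d \<in> decomps N"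
  then have "(SOME C. C \<in> d) \<subseteq> N"
    by (rule some_mem_decomps_subset)
  with assms have "divg X s R x (SOME C. C \<in> d) (N - (SOME C. C \<in> d)) = 0"
    by (intro divg_eq_0_if_same_pos) (auto intro: finite_subset)
  then show "p N R x d * divg X s R x (SOME C. C \<in> d) (N - (SOME C. C \<in> d)) = 0"
    by simp
qed

lemma score_dsf_eq_if_maximiser_has_exp_div_0:
  assumes "\<forall>y\<in>X. exp_div X s p N R y \<ge> 0"
    and "x \<in> score_dsf X s p N R" "exp_div X s p N R x = 0"
  shows "score_dsf X s p N R = X"
proof -
  have "\<forall>y\<in>X. exp_div X s p N R y = 0"
    using assms unfolding score_dsf_def by (auto intro: order.antisym)
  then show ?thesis
    unfolding score_dsf_def by auto
qed

theorem proposition2: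
  fixes X :: "'a set"
    and s :: "nat \<Rightarrow> real"
    and p :: "nat set \<Rightarrow> (nat \<Rightarrow> ('a \<times> 'a) set) \<Rightarrow> 'a \<Rightarrow> nat set set \<Rightarrow> real"
  assumes "finite X"
    and "\<And>N R x. is_profile X N R \<Longrightarrow> x \<in> X \<Longrightarrow> is_distr N (p N R x)"
  shows "weak_position_unanimity X (score_dsf X s p)"
  unfolding weak_position_unanimity_def
proof (intro allI impI)
  fix N R x
  assume profile: "is_profile X N R" and "x \<in> X" and "\<exists>k. \<forall>i\<in>N. pos X (R i) x = k"
  have "finite N"
    using profile unfolding is_profile_def by blast
  moreover obtain k where "\<forall>i\<in>N. pos X (R i) x = k"
    using \<open>\<exists>k. \<forall>i\<in>N. pos X (R i) x = k\<close> by blast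
  ultimately have "exp_div X s p N R x = 0"
    by (rule exp_div_eq_0_if_same_pos)
  moreover have "\<forall>y\<in>X. exp_div X s p N R y \<ge> 0"
  proof
    fix y assume "y \<in> X"
    show "exp_div X s p N R y \<ge> 0"
      by (rule exp_div_nonneg) (rule assms(2)[OF profile \<open>y \<in> X\<close>])
  qed
  ultimately show "x \<notin> score_dsf X s p N R \<or> score_dsf X s p N R = X"
    using score_dsf_eq_if_maximiser_has_exp_div_0[of X s p N R x] by blast
qed

end
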